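(* Consider the MDP model with $\mathbf{Y}=\{b_n:n\ge1\}\cup\{1\}$, where $b_n=\sum_{i=1}^n 2^{-i}$, endowed with the relative Euclidean topology, state space $\mathbf{X}=\mathbf{Y}\cup\{\Delta\}$ with $\Delta$ an isolated point, action space $\mathbf{A}=\{1,2,3\}$ with the discrete topology, and transition kernel: $p(\{\Delta\}|\Delta,a)=p(\{\Delta\}|1,a)=1$ for all $a$; $p(\{\Delta\}|b_1,1)=1$; $p(\{b_n\}|b_n,1)=1-2^{-(n-2)}$ and $p(\{\Delta\}|b_n,1)=2^{-(n-2)}$ for $n\ge2$; and for all $n\ge1$: $p(\{\Delta\}|b_n,2)=p(\{b_{n+1}\}|b_n,2)=\tfrac12$; $p(\{\Delta\}|b_n,3)=p(\{1\}|b_n,3)=\tfrac14$, $p(\{b_{n+1}\}|b_n,3)=\tfrac12$. Let the initial state be $x_0=b_1=\tfrac12$. For $n\ge3$ let $\psi^n$ be the deterministic stationary strategy with $\psi^n(x)=2$ for $x\in\{b_1,\dots,b_n\}$, $\psi^n(x)=1$ for $x\in\{b_m:m\ge n+1\}$, and $\psi^n(x)=3$ for $x\in\{1,\Delta\}$; let $\psi$ be the deterministic stationary strategy with $\psi\equiv3$; and let $\Lambda=\{\psi^n:n\ge3\}\cup\{\psi\}$. Then: (a) Condition (S) is satisfied; (b) the model is absorbing but not $\Lambda$-uniformly absorbing with the initial state $x_0$; (c) $\eta^{\psi^n}_{x_0}|_{\mathbf{Y}}$ converges to $\eta^{\psi}_{x_0}|_{\mathbf{Y}}$ as $n\to\infty$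 in the w-topology, but not in the s-topology; (d) $\mathcal{D}^\Lambda_{x_0}|_{\mathbf{Y}}$ is w-compact but not s-compact in $\mathcal{M}(\mathbf{Y})$.
   Context: For an MDP model with Borel state space $\mathbf{X}$, Borel action space $\mathbf{A}$ and transition kernel $p$: with $\mathbf{H}_0=\mathbf{X}$, $\mathbf{H}_n=(\mathbf{X}\times\mathbf{A})^n\times\mathbf{X}$, $\mathbf{H}=\mathbf{X}\times(\mathbf{A}\times\mathbf{X})^\infty$, $X_n(h)=x_n$, $A_{n+1}(h)=a_{n+1}$, a strategy is a sequence $\pi=\{\pi_n\}_{n\ge1}$ of stochastic kernels $\pi_n(da|h_{n-1})$ on $\mathcal{B}(\mathbf{A})$ given $\mathbf{H}_{n-1}$, $\Pi$ the set of all strategies. A deterministic stationary strategy given by a measurable map $\psi:\mathbf{X}\to\mathbf{A}$ is the strategy with $\pi_n(da|h_{n-1})=\delta_{\psi(x_{n-1})}(da)$ for all $n$. $\mathbb{P}^\pi_{x_0}$ is the unique probability on $\mathbf{H}$ with $X_0=x_0$, conditional law of $A_{n+1}$ given $X_0,A_1,\dots,X_n$ equal to $\pi_{n+1}(\cdot|X_0,A_1,\dots,X_n)$, conditional law of $X_{n+1}$ given $X_0,\dots,X_n,A_{n+1}$ equal to $p(\cdot|X_n,A_{n+1})$; $\mathbb{E}^\pi_{x_0}$ its expectation. With $\tau=\inf\{n\ge0:X_n=\Delta\}$, the model is absorbing with initial state $x_0$ if $\mathbb{E}^\pi_{x_0}[\tau]<\infty$ for all $\pi\in\Pi$, and for nonempty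 $\Lambda\subseteq\Pi$ an absorbing model is $\Lambda$-uniformly absorbing if $\lim_{n\to\infty}\sup_{\pi\in\Lambda}\mathbb{E}^\pi_{x_0}[\sum_{t=n}^\infty\mathbb{I}\{\tau>t\}]=0$. The occupation measure is $\eta^\pi_{x_0}(dx\times da)=\mathbb{E}^\pi_{x_0}[\sum_{n\ge0}\mathbb{I}\{X_n\in dx,A_{n+1}\in da\}]$ on $\mathbf{Y}\times\mathbf{A}$, its marginal is $\eta^\pi_{x_0}|_{\mathbf{Y}}(dx)=\eta^\pi_{x_0}(dx\times\mathbf{A})$, and $\mathcal{D}^\Lambda_{x_0}|_{\mathbf{Y}}=\{\eta^\pi_{x_0}|_{\mathbf{Y}}:\pi\in\Lambda\}$. Condition (S): $\mathbf{A}$ is compact and for each bounded measurable $g$ on $\mathbf{X}$ and each $x\in\mathbf{X}$, $a\mapsto\int_{\mathbf{X}}g(y)p(dy|x,a)$ is continuous. On the space $\mathcal{M}(\mathbf{Y})$ of finite Borel measures on $\mathbf{Y}$: the w-topology is the coarsest topology making $\eta\mapsto\int f\,d\eta$ continuous for all bounded continuous $f$; the s-topology is the coarsest topology making $\eta\mapsto\int f\,d\eta$ continuous for all bounded measurable $f$. *)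

theory Defs
  imports "HOL-Probability.Probability"
begin

text \<open>A history h_n = (x_0,a_1,x_1,...,a_n,x_n) is represented as the list
  [(x_0,a_1),...,(x_{n-1},a_n)] together with the last state x_n.\<close>
type_synonym ('x,'a) hist = "('x \<times> 'a) list \<times> 'x"

text \<open>A strategy: pi (Suc n) h_n is the law pi_{n+1}(da|h_n) of A_{n+1}
  (the component pi 0 is never used).\<close>
type_synonym ('x,'a) strategy = "nat \<Rightarrow> ('x,'a) hist \<Rightarrow> 'a pmf"

definition strategies :: "'a set \<Rightarrow> ('x,'a) strategy set" where
  "strategies A = {\<pi>. \<forall>n h. set_pmf (\<pi> n h) \<subseteq> A}"

definition det_stationary :: "('x \<Rightarrow> 'a) \<Rightarrow> ('x,'a) strategy" where
  "det_stationary \<psi> = (\<lambda>n h. return_pmf (\<psi> (snd h)))"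

text \<open>Law of the history H_n = (X_0,A_1,...,X_n) under P^pi_{x0}
  (finite-dimensional marginals of the strategic measure).\<close>
primrec hist_dist :: "('x \<Rightarrow> 'a \<Rightarrow> 'x pmf) \<Rightarrow> ('x,'a) strategy \<Rightarrow> 'x \<Rightarrow> nat \<Rightarrow> ('x,'a) hist pmf" where
  "hist_dist p \<pi> x0 0 = return_pmf ([], x0)"
| "hist_dist p \<pi> x0 (Suc n) =
     bind_pmf (hist_dist p \<pi> x0 n) (\<lambda>h.
       bind_pmf (\<pi> (Suc n) h) (\<lambda>a.
         map_pmf (\<lambda>y. (fst h @ [(snd h, a)], y)) (p (snd h) a)))"

definition sa_dist :: "('x \<Rightarrow> 'a \<Rightarrow> 'x pmf) \<Rightarrow> ('x,'a) strategy \<Rightarrow> 'x \<Rightarrow> nat \<Rightarrow> ('x \<times> 'a) pmf" where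
  "sa_dist p \<pi> x0 n =
     bind_pmf (hist_dist p \<pi> x0 n) (\<lambda>h. map_pmf (\<lambda>a. (snd h, a)) (\<pi> (Suc n) h))"

definition states_of :: "('x,'a) hist \<Rightarrow> 'x set" where
  "states_of h = insert (snd h) (fst ` set (fst h))"

text \<open>P^pi_{x0}(tau > t) = P(X_0,...,X_t all different from Delta).\<close>
definition tau_gt_prob :: "'x \<Rightarrow> ('x \<Rightarrow> 'a \<Rightarrow> 'x pmf) \<Rightarrow> ('x,'a) strategy \<Rightarrow> 'x \<Rightarrow> nat \<Rightarrow> real" where
  "tau_gt_prob \<Delta> p \<pi> x0 t = measure_pmf.prob (hist_dist p \<pi> x0 t) {h. \<Delta> \<notin> states_of h}"

text \<open>E^pi_{x0}[sum_{t>=n} I{tau>t}] (by Tonelli); for n = 0 this is E^pi_{x0}[tau].\<close>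
definition tail_tau :: "'x \<Rightarrow> ('x \<Rightarrow> 'a \<Rightarrow> 'x pmf) \<Rightarrow> ('x,'a) strategy \<Rightarrow> 'x \<Rightarrow> nat \<Rightarrow> ennreal" where
  "tail_tau \<Delta> p \<pi> x0 n = (\<Sum>t. ennreal (tau_gt_prob \<Delta> p \<pi> x0 (t + n)))"

definition exp_tau :: "'x \<Rightarrow> ('x \<Rightarrow> 'a \<Rightarrow> 'x pmf) \<Rightarrow> ('x,'a) strategy \<Rightarrow> 'x \<Rightarrow> ennreal" where
  "exp_tau \<Delta> p \<pi> x0 = tail_tau \<Delta> p \<pi> x0 0"

definition absorbing :: "'x \<Rightarrow> ('x \<Rightarrow> 'a \<Rightarrow> 'x pmf) \<Rightarrow> 'a set \<Rightarrow> 'x \<Rightarrow> bool" where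
  "absorbing \<Delta> p A x0 \<longleftrightarrow> (\<forall>\<pi>\<in>strategies A. exp_tau \<Delta> p \<pi> x0 < \<infinity>)"

definition uniformly_absorbing ::
  "'x \<Rightarrow> ('x \<Rightarrow> 'a \<Rightarrow> 'x pmf) \<Rightarrow> 'a set \<Rightarrow> ('x,'a) strategy set \<Rightarrow> 'x \<Rightarrow> bool" where
  "uniformly_absorbing \<Delta> p A \<Lambda> x0 \<longleftrightarrow>
     absorbing \<Delta> p A x0 \<and> ((\<lambda>n. \<Squnion>\<pi>\<in>\<Lambda>. tail_tau \<Delta> p \<pi> x0 n) \<longlonglongrightarrow> 0)"

definition condition_S ::
  "('x::topological_space) set \<Rightarrow> ('a::topological_space) set \<Rightarrow> ('x \<Rightarrow> 'a \<Rightarrow> 'x pmf) \<Rightarrow> bool" where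
  "condition_S X A p \<longleftrightarrow> compact A \<and>
     (\<forall>g::'x \<Rightarrow> real. g \<in> borel_measurable (restrict_space borel X) \<and> bounded (g ` X) \<longrightarrow>
        (\<forall>x\<in>X. continuous_on A (\<lambda>a. \<integral>y. g y \<partial>measure_pmf (p x a))))"

definition occ_measure ::
  "('x::topological_space) set \<Rightarrow> ('a::topological_space) set \<Rightarrow> ('x \<Rightarrow> 'a \<Rightarrow> 'x pmf)
     \<Rightarrow> ('x,'a) strategy \<Rightarrow> 'x \<Rightarrow> ('x \<times> 'a) measure" where
  "occ_measure Y A p \<pi> x0 =
     measure_of (Y \<times> A) (sets (restrict_space borel (Y \<times> A)))
       (\<lambda>C. \<Sum>n. ennreal (measure_pmf.prob (sa_dist p \<pi> x0 n) C))"

definition occ_Y ::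
  "('x::topological_space) set \<Rightarrow> ('a::topological_space) set \<Rightarrow> ('x \<Rightarrow> 'a \<Rightarrow> 'x pmf)
     \<Rightarrow> ('x,'a) strategy \<Rightarrow> 'x \<Rightarrow> 'x measure" where
  "occ_Y Y A p \<pi> x0 =
     measure_of Y (sets (restrict_space borel Y)) (\<lambda>B. emeasure (occ_measure Y A p \<pi> x0) (B \<times> A))"

definition finite_measures_on :: "('x::topological_space) set \<Rightarrow> 'x measure set" where
  "finite_measures_on Y = {\<mu>. sets \<mu> = sets (restrict_space borel Y) \<and> finite_measure \<mu>}"

definition initial_topology :: "'m set \<Rightarrow> ('m \<Rightarrow> real) set \<Rightarrow> 'm topology" where
  "initial_topology M \<Phi> =
     topology_generated_by {{\<mu>\<in>M. \<phi> \<mu> \<in> U} | \<phi> U. \<phi> \<in> \<Phi> \<and> open U}"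

definition w_topology :: "('x::topological_space) set \<Rightarrow> 'x measure topology" where
  "w_topology Y = initial_topology (finite_measures_on Y)
     {(\<lambda>\<mu>. \<integral>x. f x \<partial>\<mu>) | f. continuous_on Y f \<and> bounded (f ` Y)}"

definition s_topology :: "('x::topological_space) set \<Rightarrow> 'x measure topology" where
  "s_topology Y = initial_topology (finite_measures_on Y)
     {(\<lambda>\<mu>. \<integral>x. f x \<partial>\<mu>) | f. f \<in> borel_measurable (restrict_space borel Y) \<and> bounded (f ` Y)}"

definition bseq :: "nat \<Rightarrow> real" where
  "bseq n = (\<Sum>i=1..n. (1/2::real)^i)"

text \<open>Delta is encoded as the real number 2, an isolated point of X.\<close>
definition Delta :: real where "Delta = 2"

definition Yset :: "real set" where "Yset = bseq ` {1..} \<union> {1}"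

definition Xset :: "real set" where "Xset = insert Delta Yset"

definition Aset :: "nat set" where "Aset = {1,2,3}"

definition kern :: "real \<Rightarrow> nat \<Rightarrow> real pmf" where
  "kern x a =
    (if x \<in> bseq ` {1..} then
       (let n = (THE n. 1 \<le> n \<and> x = bseq n) in
        if a = 1 then
          (if n = 1 then return_pmf Delta
           else map_pmf (\<lambda>c. if c then Delta else bseq n) (bernoulli_pmf ((1/2)^(n-2))))
        else if a = 2 then
          map_pmf (\<lambda>c. if c then Delta else bseq (Suc n)) (bernoulli_pmf (1/2))
        else
          map_pmf (\<lambda>k::nat. if k = 0 then Delta else if k = 1 then 1 else bseq (Suc n))
            (pmf_of_set {0,1,2,3}))
     else return_pmf Delta)"

definition psin :: "nat \<Rightarrow> real \<Rightarrow> nat" where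
  "psin n x = (if x \<in> bseq ` {1..n} then 2 else if x \<in> bseq ` {Suc n..} then 1 else 3)"

definition psi :: "real \<Rightarrow> nat" where "psi x = 3"

definition Lam :: "(real, nat) strategy set" where
  "Lam = {det_stationary (psin n) | n. 3 \<le> n} \<union> {det_stationary psi}"

end

theory Submission
  imports Defs
begin

text \<open>
  Condition (S) is trivial because the action
  space is finite and discrete. The function V with V(b_n) = 2^n + 3, V(1) = 1 and V(Delta) = 0
  satisfies E[V(X_{t+1}) | X_t = x, A_{t+1} = a] + 1 <= V(x) for all x /= Delta and all actions a,
  so E tau <= V(b_1) under every strategy.

  Under psi^N the state climbs through b_1, ..., b_{N+1}, sitting at b_k at time k - 1 with
  probability 2^(1-k), and then stays at b_{N+1} for a geometric time of mean 2^(N-1). Hence the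
  occupation measure of psi^N is the sum of 2^(1-k) delta_{b_k} over k <= N plus
  (1/2) delta_{b_{N+1}}, and this last mass 1/2 is spent after time N, which rules out uniform
  absorption. The occupation measure of psi is the sum of 2^(1-k) delta_{b_k} over all k plus
  (1/2) delta_1. Since b_{N+1} tends to 1, integrals of bounded continuous functions converge;
  but each s-open set of the form {mu. mu {y} > 1/4} with y = 1 or y = b_{N+1} contains exactly
  one of these occupation measures, so their infinite set is not s-compact (and the sequence does
  not converge setwise), while it is w-compact as a convergent sequence together with its limit.
\<close>

section \<open>Expected absorption time and Lyapunov functions\<close>

lemma nn_integral_hist_dist_Suc:
  fixes p :: "'x \<Rightarrow> 'a \<Rightarrow> 'x pmf"
  shows "(\<integral>\<^sup>+h. f (snd h) \<partial>hist_dist p \<pi> x0 (Suc t)) =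
   (\<integral>\<^sup>+h. \<integral>\<^sup>+a. \<integral>\<^sup>+y. f y \<partial>p (snd h) a \<partial>\<pi> (Suc t) h \<partial>hist_dist p \<pi> x0 t)"
  by (simp add: nn_integral_bind_pmf nn_integral_map_pmf)

lemma Lyapunov_step_hist_dist:
  fixes p :: "'x \<Rightarrow> 'a \<Rightarrow> 'x pmf" and V :: "'x \<Rightarrow> ennreal"
  assumes drift: "\<And>x a. (\<integral>\<^sup>+y. V y \<partial>p x a) + indicator (- {\<Delta>}) x \<le> V x"
  shows "(\<integral>\<^sup>+h. V (snd h) \<partial>hist_dist p \<pi> x0 (Suc t))
      + emeasure (hist_dist p \<pi> x0 t) {h. snd h \<noteq> \<Delta>}
    \<le> (\<integral>\<^sup>+h. V (snd h) \<partial>hist_dist p \<pi> x0 t)"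
proof -
  have "emeasure (hist_dist p \<pi> x0 t) {h. snd h \<noteq> \<Delta>}
      = (\<integral>\<^sup>+h. indicator (- {\<Delta>}) (snd h) \<partial>hist_dist p \<pi> x0 t)"
    by (simp add: nn_integral_indicator[symmetric] indicator_def del: nn_integral_indicator)
  then have "(\<integral>\<^sup>+h. V (snd h) \<partial>hist_dist p \<pi> x0 (Suc t))
      + emeasure (hist_dist p \<pi> x0 t) {h. snd h \<noteq> \<Delta>}
    = (\<integral>\<^sup>+h. (\<integral>\<^sup>+a. \<integral>\<^sup>+y. V y \<partial>p (snd h) a \<partial>\<pi> (Suc t) h) + indicator (- {\<Delta>}) (snd h)
        \<partial>hist_dist p \<pi> x0 t)"
    by (simp add: nn_integral_hist_dist_Suc nn_integral_add)
  also have "\<dots> \<le> (\<integral>\<^sup>+h. V (snd h) \<partial>hist_dist p \<pi> x0 t)"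
  proof (rule nn_integral_mono)
    fix h :: "('x, 'a) hist"
    have "(\<integral>\<^sup>+a. \<integral>\<^sup>+y. V y \<partial>p (snd h) a \<partial>\<pi> (Suc t) h) + indicator (- {\<Delta>}) (snd h)
        = (\<integral>\<^sup>+a. (\<integral>\<^sup>+y. V y \<partial>p (snd h) a) + indicator (- {\<Delta>}) (snd h) \<partial>\<pi> (Suc t) h)"
      by (simp add: nn_integral_add measure_pmf.emeasure_space_1)
    also have "\<dots> \<le> (\<integral>\<^sup>+a. V (snd h) \<partial>\<pi> (Suc t) h)"
      by (intro nn_integral_mono drift)
    finally show "(\<integral>\<^sup>+a. \<integral>\<^sup>+y. V y \<partial>p (snd h) a \<partial>\<pi> (Suc t) h) + indicator (- {\<Delta>}) (snd h)
        \<le> V (snd h)"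
      by (simp add: measure_pmf.emeasure_space_1)
  qed
  finally show ?thesis .
qed

lemma exp_tau_le_Lyapunov:
  fixes p :: "'x \<Rightarrow> 'a \<Rightarrow> 'x pmf" and V :: "'x \<Rightarrow> ennreal"
  assumes drift: "\<And>x a. (\<integral>\<^sup>+y. V y \<partial>p x a) + indicator (- {\<Delta>}) x \<le> V x"
  shows "exp_tau \<Delta> p \<pi> x0 \<le> V x0"
proof -
  let ?alive = "\<lambda>t. emeasure (hist_dist p \<pi> x0 t) {h. snd h \<noteq> \<Delta>}"
  have bound: "(\<Sum>s<t. ?alive s) + (\<integral>\<^sup>+h. V (snd h) \<partial>hist_dist p \<pi> x0 t) \<le> V x0" for t
  proof (induction t)
    case (Suc t)
    have "(\<Sum>s<Suc t. ?alive s) + (\<integral>\<^sup>+h. V (snd h) \<partial>hist_dist p \<pi> x0 (Suc t))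
        = (\<Sum>s<t. ?alive s) + ((\<integral>\<^sup>+h. V (snd h) \<partial>hist_dist p \<pi> x0 (Suc t)) + ?alive t)"
      by (simp add: ac_simps)
    also have "\<dots> \<le> (\<Sum>s<t. ?alive s) + (\<integral>\<^sup>+h. V (snd h) \<partial>hist_dist p \<pi> x0 t)"
      by (intro add_left_mono Lyapunov_step_hist_dist drift)
    finally show ?case using Suc by order
  qed simp
  have "{h. \<Delta> \<notin> states_of h} \<subseteq> {h. snd h \<noteq> \<Delta>}"
    by (auto simp: states_of_def)
  then have alive: "ennreal (tau_gt_prob \<Delta> p \<pi> x0 t) \<le> ?alive t" for t
    unfolding tau_gt_prob_def measure_pmf.emeasure_eq_measure
    by (intro ennreal_leI measure_pmf.finite_measure_mono) simp_all
  show ?thesis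
    unfolding exp_tau_def tail_tau_def
  proof (rule suminf_le_const)
    fix n
    have "(\<Sum>t<n. ennreal (tau_gt_prob \<Delta> p \<pi> x0 (t + 0))) \<le> (\<Sum>s<n. ?alive s)"
      by (intro sum_mono) (simp add: alive)
    also have "\<dots> \<le> V x0"
      using bound[of n] by (rule order_trans[rotated]) simp
    finally show "(\<Sum>t<n. ennreal (tau_gt_prob \<Delta> p \<pi> x0 (t + 0))) \<le> V x0" .
  qed simp
qed

section \<open>Occupation measures of deterministic stationary strategies\<close>

definition state_dist :: "('x \<Rightarrow> 'a \<Rightarrow> 'x pmf) \<Rightarrow> ('x \<Rightarrow> 'a) \<Rightarrow> 'x \<Rightarrow> nat \<Rightarrow> 'x pmf" where
  "state_dist p \<phi> x0 t = map_pmf snd (hist_dist p (det_stationary \<phi>) x0 t)"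

lemma state_dist_0 [simp]: "state_dist p \<phi> x0 0 = return_pmf x0"
  by (simp add: state_dist_def)

lemma state_dist_Suc: "state_dist p \<phi> x0 (Suc t) = state_dist p \<phi> x0 t \<bind> (\<lambda>x. p x (\<phi> x))"
  by (simp add: state_dist_def det_stationary_def map_bind_pmf bind_return_pmf map_pmf_comp bind_map_pmf)

lemma sa_dist_det_stationary:
  "sa_dist p (det_stationary \<phi>) x0 t = map_pmf (\<lambda>x. (x, \<phi> x)) (state_dist p \<phi> x0 t)"
  by (simp add: sa_dist_def state_dist_def det_stationary_def map_pmf_def bind_return_pmf bind_assoc_pmf)

lemma snd_hist_dist_absorbed:
  assumes absorb: "\<And>a. p \<Delta> a = return_pmf \<Delta>"
    and "h \<in> set_pmf (hist_dist p \<pi> x0 t)" "\<Delta> \<in> states_of h"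
  shows "snd h = \<Delta>"
  using assms(2,3)
proof (induction t arbitrary: h)
  case 0
  then show ?case by (auto simp: states_of_def)
next
  case (Suc t)
  then obtain h' a y where h': "h' \<in> set_pmf (hist_dist p \<pi> x0 t)"
    and y: "y \<in> set_pmf (p (snd h') a)" and h: "h = (fst h' @ [(snd h', a)], y)"
    by auto
  have "states_of h = insert y (states_of h')"
    using h by (auto simp: states_of_def)
  with Suc.prems Suc.IH[OF h'] y h absorb show ?case
    by auto
qed

lemma pmf_state_dist_le_tau_gt_prob:
  assumes absorb: "\<And>a. p \<Delta> a = return_pmf \<Delta>" and "y \<noteq> \<Delta>"
  shows "pmf (state_dist p \<phi> x0 t) y \<le> tau_gt_prob \<Delta> p (det_stationary \<phi>) x0 t"
proof -
  let ?H = "hist_dist p (det_stationary \<phi>) x0 t"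
  have "pmf (state_dist p \<phi> x0 t) y = measure ?H (snd -` {y} \<inter> set_pmf ?H)"
    by (simp add: state_dist_def pmf_map measure_Int_set_pmf)
  also have "\<dots> \<le> measure ?H {h. \<Delta> \<notin> states_of h}"
    using snd_hist_dist_absorbed[of p \<Delta>, OF absorb] \<open>y \<noteq> \<Delta>\<close>
    by (intro measure_pmf.finite_measure_mono) auto
  finally show ?thesis
    by (simp add: tau_gt_prob_def)
qed

lemma sets_restrict_borel_countable:
  fixes \<Omega> :: "'a::t1_space set"
  assumes "countable \<Omega>"
  shows "sets (restrict_space borel \<Omega>) = Pow \<Omega>"
proof -
  have "C \<in> sets borel" if "C \<subseteq> \<Omega>" for C
    by (rule sets.countable[OF _ countable_subset[OF that assms]]) (auto intro: borel_closed)
  then show ?thesis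
    unfolding sets_restrict_space by blast
qed

lemma suminf_swap_ennreal: "(\<Sum>i. \<Sum>n. f i n :: ennreal) = (\<Sum>n. \<Sum>i. f i n)"
proof -
  have "(\<Sum>i. \<Sum>n. f i n) = (\<integral>\<^sup>+i. (\<Sum>n. f i n) \<partial>count_space UNIV)"
    by (simp add: nn_integral_count_space_nat)
  also have "\<dots> = (\<Sum>n. \<integral>\<^sup>+i. f i n \<partial>count_space UNIV)"
    by (rule nn_integral_suminf) auto
  finally show ?thesis
    by (simp add: nn_integral_count_space_nat)
qed

lemma emeasure_occ_measure:
  fixes p :: "'x::t1_space \<Rightarrow> 'a::t1_space \<Rightarrow> 'x pmf"
  assumes "countable Y" "countable A" "C \<subseteq> Y \<times> A"
  shows "emeasure (occ_measure Y A p \<pi> x0) C = (\<Sum>n. emeasure (sa_dist p \<pi> x0 n) C)"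
proof -
  have countable: "countable (Y \<times> A)"
    using assms by simp
  have "countably_additive (Pow (Y \<times> A)) (\<lambda>C. \<Sum>n. emeasure (sa_dist p \<pi> x0 n) C)"
    unfolding countably_additive_def
  proof (intro allI impI)
    fix F :: "nat \<Rightarrow> ('x \<times> 'a) set"
    assume "disjoint_family F"
    then show "(\<Sum>i. \<Sum>n. emeasure (sa_dist p \<pi> x0 n) (F i))
        = (\<Sum>n. emeasure (sa_dist p \<pi> x0 n) (\<Union> (range F)))"
      by (simp add: suminf_swap_ennreal[of "\<lambda>i n. emeasure (sa_dist p \<pi> x0 n) (F i)"] suminf_emeasure)
  qed
  then show ?thesis
    unfolding occ_measure_def sets_restrict_borel_countable[OF countable]
    by (subst emeasure_measure_of_sigma[OF sigma_algebra_Pow])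
      (use assms in \<open>auto simp: positive_def measure_pmf.emeasure_eq_measure\<close>)
qed

lemma sets_occ_measure:
  fixes p :: "'x::t1_space \<Rightarrow> 'a::t1_space \<Rightarrow> 'x pmf"
  assumes "countable Y" "countable A"
  shows "sets (occ_measure Y A p \<pi> x0) = Pow (Y \<times> A)"
  using assms unfolding occ_measure_def
  by (simp add: sets_restrict_borel_countable sigma_algebra.sigma_sets_eq[OF sigma_algebra_Pow])

lemma sets_occ_Y:
  fixes p :: "'x::t1_space \<Rightarrow> 'a::t1_space \<Rightarrow> 'x pmf"
  assumes "countable Y"
  shows "sets (occ_Y Y A p \<pi> x0) = Pow Y"
  using assms unfolding occ_Y_def
  by (simp add: sets_restrict_borel_countable sigma_algebra.sigma_sets_eq[OF sigma_algebra_Pow])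

lemma emeasure_occ_Y:
  fixes p :: "'x::t1_space \<Rightarrow> 'a::t1_space \<Rightarrow> 'x pmf"
  assumes "countable Y" "countable A" "B \<subseteq> Y"
  shows "emeasure (occ_Y Y A p \<pi> x0) B = emeasure (occ_measure Y A p \<pi> x0) (B \<times> A)"
proof -
  have "countably_additive (Pow Y) (\<lambda>B. emeasure (occ_measure Y A p \<pi> x0) (B \<times> A))"
    unfolding countably_additive_def
  proof (intro allI impI)
    fix F :: "nat \<Rightarrow> 'x set"
    assume "range F \<subseteq> Pow Y" "disjoint_family F"
    then have "(\<Sum>i. emeasure (occ_measure Y A p \<pi> x0) (F i \<times> A))
        = emeasure (occ_measure Y A p \<pi> x0) (\<Union>i. F i \<times> A)"
      using assms by (intro suminf_emeasure) (auto simp: sets_occ_measure disjoint_family_on_def, blast)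
    also have "(\<Union>i. F i \<times> A) = \<Union> (range F) \<times> A"
      by blast
    finally show "(\<Sum>i. emeasure (occ_measure Y A p \<pi> x0) (F i \<times> A))
        = emeasure (occ_measure Y A p \<pi> x0) (\<Union> (range F) \<times> A)" .
  qed
  then show ?thesis
    unfolding occ_Y_def sets_restrict_borel_countable[OF assms(1)]
    by (subst emeasure_measure_of_sigma[OF sigma_algebra_Pow]) (use assms in \<open>auto simp: positive_def\<close>)
qed

lemma occ_Y_det_stationary:
  fixes p :: "'x::t1_space \<Rightarrow> 'a::t1_space \<Rightarrow> 'x pmf"
  assumes "countable Y" "countable A" and \<phi>: "\<And>x. \<phi> x \<in> A"
  shows "occ_Y Y A p (det_stationary \<phi>) x0
    = density (count_space Y) (\<lambda>y. \<Sum>t. ennreal (pmf (state_dist p \<phi> x0 t) y))"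
proof (rule measure_eqI)
  show "sets (occ_Y Y A p (det_stationary \<phi>) x0)
      = sets (density (count_space Y) (\<lambda>y. \<Sum>t. ennreal (pmf (state_dist p \<phi> x0 t) y)))"
    using assms by (simp add: sets_occ_Y)
  fix B
  assume "B \<in> sets (occ_Y Y A p (det_stationary \<phi>) x0)"
  then have B: "B \<subseteq> Y"
    using assms by (simp add: sets_occ_Y)
  have "emeasure (occ_Y Y A p (det_stationary \<phi>) x0) B
      = emeasure (occ_measure Y A p (det_stationary \<phi>) x0) (B \<times> A)"
    using assms(1,2) B by (rule emeasure_occ_Y)
  also have "\<dots> = (\<Sum>t. emeasure (sa_dist p (det_stationary \<phi>) x0 t) (B \<times> A))"
    using assms B by (intro emeasure_occ_measure) auto
  also have "\<dots> = (\<Sum>t. emeasure (state_dist p \<phi> x0 t) B)"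
  proof -
    have "(\<lambda>x. (x, \<phi> x)) -` (B \<times> A) = B"
      using \<phi> by auto
    then show ?thesis
      by (simp add: sa_dist_det_stationary)
  qed
  also have "\<dots> = (\<Sum>t. \<integral>\<^sup>+y. ennreal (pmf (state_dist p \<phi> x0 t) y) * indicator B y \<partial>count_space Y)"
    using B by (auto simp: nn_integral_pmf[symmetric] nn_integral_count_space_indicator
        intro!: suminf_cong nn_integral_cong split: split_indicator)
  also have "\<dots> = emeasure (density (count_space Y) (\<lambda>y. \<Sum>t. ennreal (pmf (state_dist p \<phi> x0 t) y))) B"
    using B by (simp add: emeasure_density nn_integral_suminf[symmetric])
  finally show "emeasure (occ_Y Y A p (det_stationary \<phi>) x0) B
      = emeasure (density (count_space Y) (\<lambda>y. \<Sum>t. ennreal (pmf (state_dist p \<phi> x0 t) y))) B" .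
qed

text \<open>The measure \<Sum>n. w n \<cdot> delta (g n), for injective g.\<close>

definition point_mass_sum :: "(nat \<Rightarrow> 'a) \<Rightarrow> (nat \<Rightarrow> real) \<Rightarrow> 'a measure" where
  "point_mass_sum g w = density (count_space (range g)) (\<lambda>y. ennreal (w (inv g y)))"

lemma sets_point_mass_sum [simp]: "sets (point_mass_sum g w) = Pow (range g)"
  by (simp add: point_mass_sum_def)

lemma count_space_range_eq_distr:
  "inj g \<Longrightarrow> count_space (range g) = distr (count_space UNIV) (count_space (range g)) g"
  by (simp add: distr_bij_count_space inj_on_imp_bij_betw)

lemma sums_integral_point_mass_sum:
  fixes f :: "'a \<Rightarrow> real"
  assumes "inj g" and w: "\<And>n. 0 \<le> w n" "summable w" and f: "\<And>n. \<bar>f (g n)\<bar> \<le> M"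
  shows "(\<lambda>n. w n * f (g n)) sums (\<integral>y. f y \<partial>point_mass_sum g w)"
proof -
  have "summable (\<lambda>n. norm (w n * f (g n)))"
    using w f by (intro summable_comparison_test[OF _ summable_mult2[OF w(2), of M]])
      (auto simp: abs_mult intro!: mult_left_mono)
  then have "integrable (count_space UNIV) (\<lambda>n. w n * f (g n))"
    by (simp add: integrable_count_space_nat_iff)
  then have "(\<lambda>n. w n * f (g n)) sums (\<integral>n. w n * f (g n) \<partial>count_space UNIV)"
    by (rule sums_integral_count_space_nat)
  also have "(\<integral>n. w n * f (g n) \<partial>count_space UNIV) = (\<integral>y. w (inv g y) * f y \<partial>count_space (range g))"
    using \<open>inj g\<close> by (subst count_space_range_eq_distr) (auto simp: integral_distr)
  also have "\<dots> = (\<integral>y. f y \<partial>point_mass_sum g w)"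
    unfolding point_mass_sum_def using w by (subst integral_density) auto
  finally show ?thesis .
qed

lemma integral_indicator_point_mass_sum:
  assumes "inj g" "\<And>n. 0 \<le> w n" "summable w"
  shows "(\<integral>y. indicator {g j} y \<partial>point_mass_sum g w) = w j"
proof -
  have "(\<lambda>n. w n * indicator {g j} (g n)) sums (\<integral>y. indicator {g j} y \<partial>point_mass_sum g w)"
    using assms by (intro sums_integral_point_mass_sum[where M = 1]) (auto split: split_indicator)
  moreover have "(\<lambda>n. w n * indicator {g j} (g n)) = (\<lambda>n. if n = j then w j else 0)"
    using \<open>inj g\<close> by (auto simp: fun_eq_iff inj_eq split: split_indicator)
  ultimately show ?thesis
    using sums_single[of j "\<lambda>_. w j"] sums_unique2 by metis
qed

lemma point_mass_sum_in_finite_measures: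
  fixes g :: "nat \<Rightarrow> 'a::t1_space"
  assumes "inj g" "\<And>n. 0 \<le> w n" "summable w"
  shows "point_mass_sum g w \<in> finite_measures_on (range g)"
proof -
  have "emeasure (point_mass_sum g w) (range g)
      = (\<integral>\<^sup>+y. ennreal (w (inv g y)) \<partial>count_space (range g))"
    unfolding point_mass_sum_def by (auto simp: emeasure_density intro!: nn_integral_cong)
  also have "\<dots> = (\<Sum>n. ennreal (w n))"
    using \<open>inj g\<close> by (subst count_space_range_eq_distr)
      (auto simp: nn_integral_distr nn_integral_count_space_nat)
  also have "\<dots> = ennreal (suminf w)"
    using assms by (intro suminf_ennreal_eq) (auto simp: summable_sums)
  finally have "finite_measure (point_mass_sum g w)"
    by (intro finite_measureI) (simp add: point_mass_sum_def)
  then show ?thesis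
    by (simp add: finite_measures_on_def sets_restrict_borel_countable)
qed

lemma density_eq_point_mass_sum:
  assumes "inj g" "\<And>n. F (g n) = ennreal (w n)"
  shows "density (count_space (range g)) F = point_mass_sum g w"
  unfolding point_mass_sum_def using assms
  by (intro density_cong) (auto simp: AE_count_space)

lemma topspace_initial_topology:
  "\<Phi> \<noteq> {} \<Longrightarrow> topspace (initial_topology M \<Phi>) = M"
  unfolding initial_topology_def by (auto intro!: exI[of _ UNIV])

lemma openin_initial_topology:
  "\<phi> \<in> \<Phi> \<Longrightarrow> open U \<Longrightarrow> openin (initial_topology M \<Phi>) {\<mu> \<in> M. \<phi> \<mu> \<in> U}"
  unfolding initial_topology_def openin_topology_generated_by_iff
  by (rule generate_topology_on.Basis) blast

lemma limitin_initial_topology: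
  assumes "\<Phi> \<noteq> {}" "l \<in> M" "\<forall>\<^sub>F n in F. x n \<in> M"
    and tendsto: "\<And>\<phi>. \<phi> \<in> \<Phi> \<Longrightarrow> ((\<lambda>n. \<phi> (x n)) \<longlongrightarrow> \<phi> l) F"
  shows "limitin (initial_topology M \<Phi>) x l F"
  unfolding limitin_def
proof (intro conjI allI impI)
  show "l \<in> topspace (initial_topology M \<Phi>)"
    using assms by (simp add: topspace_initial_topology)
  fix U
  assume "openin (initial_topology M \<Phi>) U \<and> l \<in> U"
  then have "generate_topology_on {{\<mu> \<in> M. \<phi> \<mu> \<in> U} | \<phi> U. \<phi> \<in> \<Phi> \<and> open U} U" "l \<in> U"
    unfolding initial_topology_def openin_topology_generated_by_iff by auto
  then show "\<forall>\<^sub>F n in F. x n \<in> U"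
  proof (induction rule: generate_topology_on.induct)
    case (Int a b)
    then show ?case by (auto intro: eventually_conj eventually_mono)
  next
    case (UN K)
    then obtain k where "k \<in> K" "l \<in> k" by auto
    with UN have "\<forall>\<^sub>F n in F. x n \<in> k" by blast
    with \<open>k \<in> K\<close> show ?case by (auto elim: eventually_mono)
  next
    case (Basis s)
    then obtain \<phi> V where s: "s = {\<mu> \<in> M. \<phi> \<mu> \<in> V}" "\<phi> \<in> \<Phi>" "open V" by auto
    with Basis have "\<forall>\<^sub>F n in F. \<phi> (x n) \<in> V"
      using topological_tendstoD[OF tendsto] by blast
    with assms(3) show ?case
      unfolding s by (auto elim: eventually_mono intro: eventually_conj)
  qed simp
qed

lemma bseq_altdef: "bseq n = 1 - (1/2)^n"
proof (induction n)
  case (Suc n)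
  have "bseq (Suc n) = bseq n + (1/2)^Suc n"
    unfolding bseq_def by (simp add: sum.atLeast1_atMost_eq)
  with Suc show ?case by simp
qed (simp add: bseq_def)

lemma bseq_eq_iff [simp]: "bseq m = bseq n \<longleftrightarrow> m = n"
  by (simp add: bseq_altdef power_one_over)

lemma bseq_less_1: "bseq n < 1"
  by (simp add: bseq_altdef)

lemma bseq_neq [simp]: "bseq n \<noteq> 1" "1 \<noteq> bseq n" "bseq n \<noteq> Delta" "Delta \<noteq> bseq n"
  using bseq_less_1[of n] by (auto simp: Delta_def)

lemma Delta_neq_1 [simp]: "Delta \<noteq> 1" "1 \<noteq> Delta"
  by (simp_all add: Delta_def)

lemma LIMSEQ_bseq: "bseq \<longlonglongrightarrow> 1"
proof -
  have "(\<lambda>n. 1 - (1/2::real)^n) \<longlonglongrightarrow> 1 - 0"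
    by (intro tendsto_diff LIMSEQ_power_zero) auto
  then show ?thesis by (simp add: bseq_altdef[abs_def])
qed

lemma the_bseq_index: "1 \<le> n \<Longrightarrow> (THE k. 1 \<le> k \<and> bseq n = bseq k) = n"
  by (rule the_equality) auto

lemma kern_bseq_act1: "2 \<le> n \<Longrightarrow>
    kern (bseq n) 1 = map_pmf (\<lambda>c. if c then Delta else bseq n) (bernoulli_pmf ((1/2)^(n-2)))"
  using the_bseq_index[of n] by (simp add: kern_def del: bseq_eq_iff)

lemma kern_bseq1_act1: "kern (bseq 1) 1 = return_pmf Delta"
  using the_bseq_index[of 1] by (simp add: kern_def del: bseq_eq_iff)

lemma kern_bseq_act2: "1 \<le> n \<Longrightarrow>
    kern (bseq n) 2 = map_pmf (\<lambda>c. if c then Delta else bseq (Suc n)) (bernoulli_pmf (1/2))"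
  using the_bseq_index[of n] by (simp add: kern_def del: bseq_eq_iff)

lemma kern_bseq_act3: "1 \<le> n \<Longrightarrow> a \<noteq> 1 \<Longrightarrow> a \<noteq> 2 \<Longrightarrow>
    kern (bseq n) a = map_pmf (\<lambda>k::nat. if k = 0 then Delta else if k = 1 then 1 else bseq (Suc n))
      (pmf_of_set {0,1,2,3})"
  using the_bseq_index[of n] by (simp add: kern_def del: bseq_eq_iff)

lemma kern_outside: "x \<notin> bseq ` {1..} \<Longrightarrow> kern x a = return_pmf Delta"
  by (simp add: kern_def)

lemma kern_Delta [simp]: "kern Delta a = return_pmf Delta"
  and kern_1 [simp]: "kern 1 a = return_pmf Delta"
  by (auto intro: kern_outside)

lemma finite_set_pmf_kern: "finite (set_pmf (kern x a))"
  by (simp add: kern_def Let_def)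

lemma pmf_kern_bseq_act1:
  assumes "2 \<le> n"
  shows "pmf (kern (bseq n) 1) y
    = (if y = Delta then (1/2)^(n-2) else if y = bseq n then 1 - (1/2)^(n-2) else 0)"
  using kern_bseq_act1[OF assms] by (simp add: map_pmf_def pmf_bind power_le_one split: split_indicator)

lemma pmf_kern_bseq_act2:
  assumes "1 \<le> n"
  shows "pmf (kern (bseq n) 2) y = (if y = Delta \<or> y = bseq (Suc n) then 1/2 else 0)"
  using assms by (simp add: kern_bseq_act2 map_pmf_def pmf_bind split: split_indicator)

lemma pmf_kern_bseq_act3:
  assumes "1 \<le> n" "a \<noteq> 1" "a \<noteq> 2"
  shows "pmf (kern (bseq n) a) y
    = (if y = Delta \<or> y = 1 then 1/4 else if y = bseq (Suc n) then 1/2 else 0)"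
  using assms by (simp add: kern_bseq_act3 map_pmf_def pmf_bind integral_pmf_of_set split: split_indicator)

lemma condition_S_kern: "condition_S Xset Aset kern"
  unfolding condition_S_def Aset_def by (auto intro: finite_imp_compact)

text \<open>Since 1 / (1 - b_n) = 2^n, the index n need not be recovered from b_n.\<close>

definition lyap :: "real \<Rightarrow> real" where
  "lyap x = (if x \<in> bseq ` {1..} then 1 / (1 - x) + 3 else if x = Delta then 0 else 1)"

lemma lyap_bseq: "1 \<le> n \<Longrightarrow> lyap (bseq n) = 2^n + 3"
  by (auto simp: lyap_def bseq_altdef power_one_over)

lemma lyap_Delta [simp]: "lyap Delta = 0"
  by (auto simp: lyap_def)

lemma lyap_1 [simp]: "lyap 1 = 1"
  by (auto simp: lyap_def)

lemma lyap_nonneg: "0 \<le> lyap x"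
proof -
  have "0 \<le> 1 / (1 - bseq n)" for n
    using bseq_less_1[of n] by simp
  then show ?thesis by (auto simp: lyap_def)
qed

lemma integral_lyap_kern_le: "(\<integral>y. lyap y \<partial>kern x a) + indicator (- {Delta}) x \<le> lyap x"
proof (cases "x \<in> bseq ` {1..}")
  case True
  then obtain n where n: "1 \<le> n" "x = bseq n" by auto
  consider "a = 1" "n = 1" | "a = 1" "2 \<le> n" | "a = 2" | "a \<noteq> 1" "a \<noteq> 2"
    using n by linarith
  then show ?thesis
  proof cases
    case 1
    then show ?thesis using n kern_bseq1_act1 by (simp add: lyap_bseq)
  next
    case 2
    let ?q = "(1/2::real)^(n-2)"
    have "?q * 2^n = 4"
      using 2 by (simp add: power_one_over power_diff)
    moreover have "(\<integral>y. lyap y \<partial>kern x a) = (2^n + 3) * (1 - ?q)"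
      using 2 n kern_bseq_act1[of n] by (simp add: lyap_bseq power_le_one)
    ultimately have "(\<integral>y. lyap y \<partial>kern x a) = 2^n - 1 - 3 * ?q"
      by (simp add: algebra_simps)
    moreover have "lyap x = 2^n + 3" "indicator (- {Delta}) x = (1::real)"
      using n by (simp_all add: lyap_bseq)
    moreover have "0 \<le> ?q" by simp
    ultimately show ?thesis by linarith
  next
    case 3
    then show ?thesis using n by (simp add: kern_bseq_act2 lyap_bseq)
  next
    case 4
    then show ?thesis using n by (simp add: kern_bseq_act3 lyap_bseq integral_pmf_of_set)
  qed
next
  case False
  then have "lyap x = (if x = Delta then 0 else 1)"
    by (simp add: lyap_def)
  with False show ?thesis
    by (simp add: kern_outside)
qed

lemma nn_integral_lyap_kern_le:
  "(\<integral>\<^sup>+y. ennreal (lyap y) \<partial>kern x a) + indicator (- {Delta}) x \<le> ennreal (lyap x)"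
proof -
  have "0 \<le> (\<integral>y. lyap y \<partial>kern x a)"
    by (simp add: lyap_nonneg)
  then have "(\<integral>\<^sup>+y. ennreal (lyap y) \<partial>kern x a) + indicator (- {Delta}) x
      = ennreal ((\<integral>y. lyap y \<partial>kern x a) + indicator (- {Delta}) x)"
    by (simp add: nn_integral_eq_integral integrable_measure_pmf_finite finite_set_pmf_kern
        lyap_nonneg ennreal_plus ennreal_indicator)
  also have "\<dots> \<le> ennreal (lyap x)"
    using integral_lyap_kern_le by (rule ennreal_leI)
  finally show ?thesis .
qed

lemma absorbing_kern: "absorbing Delta kern Aset (bseq 1)"
  unfolding absorbing_def
proof
  fix \<pi> :: "(real, nat) strategy"
  have "exp_tau Delta kern \<pi> (bseq 1) \<le> ennreal (lyap (bseq 1))"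
    by (intro exp_tau_le_Lyapunov nn_integral_lyap_kern_le)
  then show "exp_tau Delta kern \<pi> (bseq 1) < \<infinity>"
    by (simp add: lyap_bseq order.strict_trans1)
qed

text \<open>Every action sends 1 and Delta to Delta, so off Delta only the mass at z propagates.\<close>

lemma pmf_state_dist_Suc_one_live_state:
  assumes dead: "\<And>x. x \<notin> {z, 1, Delta} \<Longrightarrow> pmf (state_dist kern \<phi> x0 t) x = 0" and "y \<noteq> Delta"
  shows "pmf (state_dist kern \<phi> x0 (Suc t)) y = pmf (state_dist kern \<phi> x0 t) z * pmf (kern z (\<phi> z)) y"
proof -
  have "pmf (state_dist kern \<phi> x0 (Suc t)) y = (\<integral>x. pmf (kern x (\<phi> x)) y \<partial>state_dist kern \<phi> x0 t)"
    by (simp add: state_dist_Suc pmf_bind)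
  also have "\<dots> = (\<Sum>x\<in>{z}. pmf (state_dist kern \<phi> x0 t) x *\<^sub>R pmf (kern x (\<phi> x)) y)"
  proof (rule integral_measure_pmf)
    fix x
    assume "x \<in> set_pmf (state_dist kern \<phi> x0 t)" "pmf (kern x (\<phi> x)) y \<noteq> 0"
    with dead have "x \<in> {z, 1, Delta}" "pmf (kern x (\<phi> x)) y \<noteq> 0"
      by (auto simp: set_pmf_eq)
    with \<open>y \<noteq> Delta\<close> show "x \<in> {z}"
      by auto
  qed simp
  finally show ?thesis
    by simp
qed

lemma pmf_state_dist_psi:
  assumes "y \<noteq> Delta"
  shows "pmf (state_dist kern psi (bseq 1) t) y
    = (if y = bseq (Suc t) then (1/2)^t else if y = 1 \<and> t \<noteq> 0 then (1/2)^Suc t else 0)"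
  using assms
proof (induction t arbitrary: y)
  case (Suc t)
  have "pmf (state_dist kern psi (bseq 1) (Suc t)) y
      = pmf (state_dist kern psi (bseq 1) t) (bseq (Suc t)) * pmf (kern (bseq (Suc t)) (psi (bseq (Suc t)))) y"
    using Suc by (intro pmf_state_dist_Suc_one_live_state) auto
  moreover have "psi (bseq (Suc t)) = 3"
    by (simp add: psi_def)
  ultimately show ?case
    using Suc by (simp add: pmf_kern_bseq_act3)
qed auto

lemma psin_bseq_le: "1 \<le> k \<Longrightarrow> k \<le> N \<Longrightarrow> psin N (bseq k) = 2"
  by (auto simp: psin_def)

lemma psin_bseq_gt: "N < k \<Longrightarrow> psin N (bseq k) = 1"
  by (auto simp: psin_def)

lemma pmf_state_dist_psin_climb:
  assumes "t \<le> N" "y \<noteq> Delta"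
  shows "pmf (state_dist kern (psin N) (bseq 1) t) y = (if y = bseq (Suc t) then (1/2)^t else 0)"
  using assms
proof (induction t arbitrary: y)
  case (Suc t)
  have "pmf (state_dist kern (psin N) (bseq 1) (Suc t)) y
      = pmf (state_dist kern (psin N) (bseq 1) t) (bseq (Suc t)) * pmf (kern (bseq (Suc t)) (psin N (bseq (Suc t)))) y"
    using Suc by (intro pmf_state_dist_Suc_one_live_state) auto
  with Suc show ?case
    by (simp add: pmf_kern_bseq_act2 psin_bseq_le)
qed auto

lemma pmf_state_dist_psin_stay:
  assumes "1 \<le> N" "y \<noteq> Delta"
  shows "pmf (state_dist kern (psin N) (bseq 1) (N + s)) y
    = (if y = bseq (Suc N) then (1/2)^N * (1 - (1/2)^(N-1))^s else 0)"
  using assms(2)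
proof (induction s arbitrary: y)
  case 0
  then show ?case
    using pmf_state_dist_psin_climb[of N N y] by simp
next
  case (Suc s)
  have "pmf (state_dist kern (psin N) (bseq 1) (Suc (N + s))) y
      = pmf (state_dist kern (psin N) (bseq 1) (N + s)) (bseq (Suc N)) * pmf (kern (bseq (Suc N)) (psin N (bseq (Suc N)))) y"
    using Suc by (intro pmf_state_dist_Suc_one_live_state) auto
  with Suc assms(1) show ?case
    using pmf_kern_bseq_act1[of "Suc N" y] by (simp add: psin_bseq_gt)
qed

lemma sums_pmf_state_dist_psin_top:
  assumes "1 \<le> N"
  shows "(\<lambda>t. pmf (state_dist kern (psin N) (bseq 1) t) (bseq (Suc N))) sums (1/2)"
proof -
  let ?f = "\<lambda>t. pmf (state_dist kern (psin N) (bseq 1) t) (bseq (Suc N))"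
  have "norm (1 - (1/2::real)^(N-1)) < 1"
    by (simp add: power_le_one)
  then have "(\<lambda>s. (1/2::real)^N * (1 - (1/2)^(N-1))^s) sums ((1/2)^N * (1 / (1 - (1 - (1/2)^(N-1)))))"
    by (intro sums_mult geometric_sums)
  moreover have "(1/2::real)^N * (1 / (1 - (1 - (1/2)^(N-1)))) = 1/2"
    using assms by (cases N) (simp_all add: field_simps)
  moreover have "?f (s + N) = (1/2)^N * (1 - (1/2)^(N-1))^s" for s
    using pmf_state_dist_psin_stay[OF assms, of "bseq (Suc N)" s] by (simp add: add.commute)
  ultimately have "(\<lambda>s. ?f (s + N)) sums (1/2)"
    by simp
  moreover have "(\<Sum>t<N. ?f t) = 0"
    \<comment> \<open>One_nat_def would turn the initial state bseq 1 into bseq (Suc 0), on which the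
      lemmas about state_dist kern _ (bseq 1) no longer fire as rewrite rules.\<close>
    by (simp add: pmf_state_dist_psin_climb del: One_nat_def)
  ultimately show ?thesis
    using sums_iff_shift[of ?f N "1/2"] by simp
qed

lemma tail_tau_psin_ge:
  assumes "1 \<le> N" "n \<le> N"
  shows "ennreal (1/2) \<le> tail_tau Delta kern (det_stationary (psin N)) (bseq 1) n"
proof -
  let ?q = "\<lambda>t. pmf (state_dist kern (psin N) (bseq 1) t) (bseq (Suc N))"
  have "?q sums (1/2)"
    by (rule sums_pmf_state_dist_psin_top[OF assms(1)])
  moreover have "(\<Sum>t<n. ?q t) = 0"
    using assms by (simp add: pmf_state_dist_psin_climb del: One_nat_def)
  ultimately have "(\<lambda>t. ?q (t + n)) sums (1/2)"
    using sums_iff_shift[of ?q n "1/2"] by simp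
  then have "ennreal (1/2) = (\<Sum>t. ennreal (?q (t + n)))"
    by (rule suminf_ennreal_eq[symmetric, rotated]) simp
  also have "\<dots> \<le> tail_tau Delta kern (det_stationary (psin N)) (bseq 1) n"
    unfolding tail_tau_def
    by (intro suminf_le ennreal_leI pmf_state_dist_le_tau_gt_prob) auto
  finally show ?thesis .
qed

lemma not_uniformly_absorbing_Lam: "\<not> uniformly_absorbing Delta kern Aset Lam (bseq 1)"
proof
  assume "uniformly_absorbing Delta kern Aset Lam (bseq 1)"
  then have "(\<lambda>n. \<Squnion>\<pi>\<in>Lam. tail_tau Delta kern \<pi> (bseq 1) n) \<longlonglongrightarrow> 0"
    by (simp add: uniformly_absorbing_def)
  moreover have "ennreal (1/2) \<le> (\<Squnion>\<pi>\<in>Lam. tail_tau Delta kern \<pi> (bseq 1) n)" for n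
  proof -
    have "det_stationary (psin (n + 3)) \<in> Lam"
      by (auto simp: Lam_def)
    then show ?thesis
      using tail_tau_psin_ge[of "n + 3" n] by (auto intro: SUP_upper2)
  qed
  ultimately have "ennreal (1/2) \<le> 0"
    by (intro LIMSEQ_le_const) auto
  then show False
    by simp
qed

definition yenum :: "nat \<Rightarrow> real" where
  "yenum k = (if k = 0 then 1 else bseq k)"

lemma yenum_0 [simp]: "yenum 0 = 1"
  and yenum_Suc [simp]: "yenum (Suc k) = bseq (Suc k)"
  by (simp_all add: yenum_def)

lemma inj_yenum: "inj yenum"
  by (auto simp: inj_def yenum_def)

lemma range_yenum: "range yenum = Yset"
  by (force simp: Yset_def yenum_def image_iff intro: exI[of _ 0])

definition w_psi :: "nat \<Rightarrow> real" where
  "w_psi k = (if k = 0 then 1/2 else (1/2)^(k-1))"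

definition w_psin :: "nat \<Rightarrow> nat \<Rightarrow> real" where
  "w_psin N k = (if k = 0 then 0 else if k \<le> N then (1/2)^(k-1) else if k = Suc N then 1/2 else 0)"

lemma w_psi_nonneg: "0 \<le> w_psi k"
  and w_psin_nonneg: "0 \<le> w_psin N k"
  by (simp_all add: w_psi_def w_psin_def)

lemma summable_w_psi: "summable w_psi"
  by (subst summable_Suc_iff[symmetric]) (simp add: w_psi_def)

lemma summable_w_psin: "summable (w_psin N)"
  by (rule summable_finite[of "{..Suc N}"]) (auto simp: w_psin_def)

lemma sums_pmf_state_dist_psi:
  "(\<lambda>t. pmf (state_dist kern psi (bseq 1) t) (yenum k)) sums w_psi k"
proof (cases k)
  case 0
  have "(\<lambda>t. (1/4::real) * (1/2)^t) sums (1/4 * (1 / (1 - 1/2)))"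
    by (intro sums_mult geometric_sums) simp
  then have "(\<lambda>t. pmf (state_dist kern psi (bseq 1) (Suc t)) 1) sums (1/2)"
    by (simp add: pmf_state_dist_psi power_add del: One_nat_def)
  then have "(\<lambda>t. pmf (state_dist kern psi (bseq 1) t) 1) sums (1/2 + pmf (state_dist kern psi (bseq 1) 0) 1)"
    by (rule sums_Suc_iff[THEN iffD1])
  then show ?thesis
    using 0 by (simp add: w_psi_def)
next
  case (Suc m)
  have "(\<lambda>t. pmf (state_dist kern psi (bseq 1) t) (yenum k)) = (\<lambda>t. if t = m then (1/2)^m else 0)"
    using Suc by (auto simp: pmf_state_dist_psi simp del: One_nat_def)
  then show ?thesis
    using Suc sums_single[of m "\<lambda>_. (1/2::real)^m"] by (simp add: w_psi_def)
qed

lemma sums_pmf_state_dist_psin: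
  assumes "1 \<le> N"
  shows "(\<lambda>t. pmf (state_dist kern (psin N) (bseq 1) t) (yenum k)) sums w_psin N k"
proof (cases "k = Suc N")
  case True
  with sums_pmf_state_dist_psin_top[OF assms] show ?thesis
    by (simp add: w_psin_def)
next
  case False
  have "pmf (state_dist kern (psin N) (bseq 1) t) (yenum k) = (if t = k - 1 then w_psin N k else 0)" for t
  proof (cases "t \<le> N")
    case True
    with False show ?thesis
      by (cases k) (auto simp: pmf_state_dist_psin_climb w_psin_def simp del: One_nat_def)
  next
    case False
    then obtain s where "t = N + s"
      using le_Suc_ex[of N t] by auto
    with \<open>k \<noteq> Suc N\<close> False assms show ?thesis
      by (cases k) (auto simp: pmf_state_dist_psin_stay w_psin_def simp del: One_nat_def)
  qed
  then show ?thesis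
    using sums_single[of "k - 1" "\<lambda>_. w_psin N k"] by simp
qed

lemma occ_Y_eq_point_mass_sum:
  assumes "\<And>x. \<phi> x \<in> Aset" "\<And>k. (\<lambda>t. pmf (state_dist kern \<phi> (bseq 1) t) (yenum k)) sums w k"
  shows "occ_Y Yset Aset kern (det_stationary \<phi>) (bseq 1) = point_mass_sum yenum w"
proof -
  have "countable Yset" "countable Aset"
    by (simp_all add: Yset_def Aset_def)
  with assms(1) have "occ_Y Yset Aset kern (det_stationary \<phi>) (bseq 1)
      = density (count_space (range yenum)) (\<lambda>y. \<Sum>t. ennreal (pmf (state_dist kern \<phi> (bseq 1) t) y))"
    unfolding range_yenum by (intro occ_Y_det_stationary)
  also have "\<dots> = point_mass_sum yenum w"
    using assms(2) by (intro density_eq_point_mass_sum inj_yenum suminf_ennreal_eq) auto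
  finally show ?thesis .
qed

lemma occ_Y_psi: "occ_Y Yset Aset kern (det_stationary psi) (bseq 1) = point_mass_sum yenum w_psi"
  using sums_pmf_state_dist_psi by (rule occ_Y_eq_point_mass_sum[rotated]) (simp add: psi_def Aset_def)

lemma occ_Y_psin:
  "1 \<le> N \<Longrightarrow> occ_Y Yset Aset kern (det_stationary (psin N)) (bseq 1) = point_mass_sum yenum (w_psin N)"
  using sums_pmf_state_dist_psin by (intro occ_Y_eq_point_mass_sum) (simp_all add: psin_def Aset_def)

definition occ_Lam :: "real measure set" where
  "occ_Lam = insert (point_mass_sum yenum w_psi) ((\<lambda>N. point_mass_sum yenum (w_psin N)) ` {3..})"

lemma occ_Y_Lam: "{occ_Y Yset Aset kern \<pi> (bseq 1) | \<pi>. \<pi> \<in> Lam} = occ_Lam"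
proof -
  have "{occ_Y Yset Aset kern \<pi> (bseq 1) | \<pi>. \<pi> \<in> Lam}
      = insert (occ_Y Yset Aset kern (det_stationary psi) (bseq 1))
          ((\<lambda>N. occ_Y Yset Aset kern (det_stationary (psin N)) (bseq 1)) ` {3..})"
    unfolding Lam_def by blast
  also have "(\<lambda>N. occ_Y Yset Aset kern (det_stationary (psin N)) (bseq 1)) ` {3..}
      = (\<lambda>N. point_mass_sum yenum (w_psin N)) ` {3..}"
    by (intro image_cong refl occ_Y_psin) auto
  finally show ?thesis
    unfolding occ_Y_psi occ_Lam_def .
qed

section \<open>Weak and setwise topologies\<close>

lemma integral_point_mass_sum_w_psi:
  fixes f :: "real \<Rightarrow> real"
  assumes "\<And>y. y \<in> Yset \<Longrightarrow> \<bar>f y\<bar> \<le> M"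
  shows "(\<integral>y. f y \<partial>point_mass_sum yenum w_psi) = f 1 / 2 + (\<Sum>k. (1/2)^k * f (bseq (Suc k)))"
proof -
  have "(\<lambda>k. w_psi k * f (yenum k)) sums (\<integral>y. f y \<partial>point_mass_sum yenum w_psi)"
    using assms range_yenum
    by (intro sums_integral_point_mass_sum inj_yenum w_psi_nonneg summable_w_psi) auto
  then have "(\<lambda>k. w_psi (Suc k) * f (yenum (Suc k)))
      sums ((\<integral>y. f y \<partial>point_mass_sum yenum w_psi) - w_psi 0 * f (yenum 0))"
    by (subst sums_Suc_iff) simp
  then show ?thesis
    by (simp add: w_psi_def sums_iff)
qed

lemma integral_point_mass_sum_w_psin:
  fixes f :: "real \<Rightarrow> real"
  assumes "\<And>y. y \<in> Yset \<Longrightarrow> \<bar>f y\<bar> \<le> M"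
  shows "(\<integral>y. f y \<partial>point_mass_sum yenum (w_psin N))
    = (\<Sum>k<N. (1/2)^k * f (bseq (Suc k))) + f (bseq (Suc N)) / 2"
proof -
  let ?h = "\<lambda>k. w_psin N k * f (yenum k)"
  have "?h sums (\<integral>y. f y \<partial>point_mass_sum yenum (w_psin N))"
    using assms range_yenum
    by (intro sums_integral_point_mass_sum inj_yenum w_psin_nonneg summable_w_psin) auto
  moreover have "?h sums (\<Sum>k<Suc (Suc N). ?h k)"
    by (rule sums_finite) (auto simp: w_psin_def)
  moreover have "(\<Sum>k<Suc (Suc N). ?h k) = ?h 0 + (\<Sum>k<N. ?h (Suc k)) + ?h (Suc N)"
    by (subst sum.lessThan_Suc) (simp only: sum.lessThan_Suc_shift)
  moreover have "(\<Sum>k<N. ?h (Suc k)) = (\<Sum>k<N. (1/2)^k * f (bseq (Suc k)))"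
    by (intro sum.cong) (auto simp: w_psin_def)
  moreover have "w_psin N 0 = 0" "w_psin N (Suc N) = 1/2"
    by (simp_all add: w_psin_def)
  ultimately show ?thesis
    by (simp add: sums_iff)
qed

lemma tendsto_integral_point_mass_sum_w_psin:
  fixes f :: "real \<Rightarrow> real"
  assumes "continuous_on Yset f" "bounded (f ` Yset)"
  shows "(\<lambda>N. \<integral>y. f y \<partial>point_mass_sum yenum (w_psin N)) \<longlonglongrightarrow> (\<integral>y. f y \<partial>point_mass_sum yenum w_psi)"
proof -
  obtain M where M: "\<And>y. y \<in> Yset \<Longrightarrow> \<bar>f y\<bar> \<le> M"
    using assms(2) by (auto simp: bounded_iff)
  have Y: "bseq (Suc k) \<in> Yset" "1 \<in> Yset" for k
    by (auto simp: Yset_def)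
  then have "norm ((1/2)^k * f (bseq (Suc k))) \<le> (1/2)^k * M" for k
    using M by (simp add: abs_mult mult_left_mono)
  moreover have "summable (\<lambda>k. (1/2::real)^k * M)"
    by (intro summable_mult2) simp
  ultimately have "summable (\<lambda>k. (1/2)^k * f (bseq (Suc k)))"
    by (blast intro: summable_comparison_test')
  then have "(\<lambda>N. \<Sum>k<N. (1/2)^k * f (bseq (Suc k))) \<longlonglongrightarrow> (\<Sum>k. (1/2)^k * f (bseq (Suc k)))"
    by (rule summable_LIMSEQ)
  moreover have "(\<lambda>N. f (bseq (Suc N))) \<longlonglongrightarrow> f 1"
    using Y by (intro continuous_on_tendsto_compose[OF assms(1) LIMSEQ_Suc[OF LIMSEQ_bseq]]) auto
  ultimately have "(\<lambda>N. (\<Sum>k<N. (1/2)^k * f (bseq (Suc k))) + f (bseq (Suc N)) / 2)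
      \<longlonglongrightarrow> (\<Sum>k. (1/2)^k * f (bseq (Suc k))) + f 1 / 2"
    by (auto intro!: tendsto_intros)
  then show ?thesis
    by (simp add: integral_point_mass_sum_w_psin[OF M] integral_point_mass_sum_w_psi[OF M] add.commute)
qed

lemma limitin_w_point_mass_sum_w_psin:
  "limitin (w_topology Yset) (\<lambda>N. point_mass_sum yenum (w_psin N)) (point_mass_sum yenum w_psi) sequentially"
  unfolding w_topology_def
proof (rule limitin_initial_topology)
  show "{(\<lambda>\<mu>. \<integral>x. f x \<partial>\<mu>) | f. continuous_on Yset f \<and> bounded (f ` Yset)} \<noteq> {}"
    by (auto simp: bounded_iff intro!: exI[of _ "\<lambda>_. 0"])
  show "point_mass_sum yenum w_psi \<in> finite_measures_on Yset"
    "\<forall>\<^sub>F N in sequentially. point_mass_sum yenum (w_psin N) \<in> finite_measures_on Yset"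
    unfolding range_yenum[symmetric]
    by (simp_all add: point_mass_sum_in_finite_measures inj_yenum w_psi_nonneg summable_w_psi
        w_psin_nonneg summable_w_psin)
qed (auto intro: tendsto_integral_point_mass_sum_w_psin)

lemma compactin_w_occ_Lam: "compactin (w_topology Yset) occ_Lam"
  unfolding occ_Lam_def
proof (rule compactin_sequence_with_limit)
  show "limitin (w_topology Yset) (\<lambda>i. point_mass_sum yenum (w_psin (i + 3))) (point_mass_sum yenum w_psi) sequentially"
    using limitin_w_point_mass_sum_w_psin by (rule limitin_sequentially_offset)
  show "(\<lambda>N. point_mass_sum yenum (w_psin N)) ` {3..} \<subseteq> range (\<lambda>i. point_mass_sum yenum (w_psin (i + 3)))"
  proof (rule image_subsetI)
    fix N :: nat
    assume "N \<in> {3..}"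
    then have "point_mass_sum yenum (w_psin N) = (\<lambda>i. point_mass_sum yenum (w_psin (i + 3))) (N - 3)"
      by simp
    then show "point_mass_sum yenum (w_psin N) \<in> range (\<lambda>i. point_mass_sum yenum (w_psin (i + 3)))"
      by (metis rangeI)
  qed
  show "(\<lambda>N. point_mass_sum yenum (w_psin N)) ` {3..} \<subseteq> topspace (w_topology Yset)"
    unfolding w_topology_def
    by (subst topspace_initial_topology)
      (auto simp: bounded_iff range_yenum[symmetric] inj_yenum w_psin_nonneg summable_w_psin
        point_mass_sum_in_finite_measures intro!: exI[of _ "\<lambda>_. 0"])
qed

definition s_nbhd :: "nat \<Rightarrow> real measure set" where
  "s_nbhd k = {\<mu> \<in> finite_measures_on Yset. (\<integral>y. indicator {yenum k} y \<partial>\<mu>) \<in> {1/4::real<..}}"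

lemma openin_s_nbhd: "openin (s_topology Yset) (s_nbhd k)"
proof -
  have "{yenum k} \<in> sets (restrict_space borel Yset)"
    using range_yenum by (auto simp: sets_restrict_borel_countable Yset_def)
  then have "(indicator {yenum k} :: real \<Rightarrow> real) \<in> borel_measurable (restrict_space borel Yset)"
    by (rule borel_measurable_indicator)
  moreover have "bounded ((indicator {yenum k} :: real \<Rightarrow> real) ` Yset)"
    by (auto simp: bounded_iff intro!: exI[of _ 1] split: split_indicator)
  ultimately have "(\<lambda>\<mu>. \<integral>y. indicator {yenum k} y \<partial>\<mu>) \<in> {(\<lambda>\<mu>. \<integral>y. f y \<partial>\<mu>) | f :: real \<Rightarrow> real.
      f \<in> borel_measurable (restrict_space borel Yset) \<and> bounded (f ` Yset)}"
    by (intro CollectI exI[of _ "indicator {yenum k} :: real \<Rightarrow> real"]) simp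
  then show ?thesis
    unfolding s_topology_def s_nbhd_def by (rule openin_initial_topology) simp
qed

lemma point_mass_sum_in_s_nbhd:
  assumes "\<And>n. 0 \<le> w n" "summable w"
  shows "point_mass_sum yenum w \<in> s_nbhd k \<longleftrightarrow> 1/4 < w k"
  using point_mass_sum_in_finite_measures[OF inj_yenum assms]
    integral_indicator_point_mass_sum[OF inj_yenum assms, of k]
  by (simp add: s_nbhd_def range_yenum)

lemma half_power_le_eighth: "3 \<le> N \<Longrightarrow> (1/2::real)^N \<le> 1/8"
  using power_decreasing[of 3 N "1/2::real"] by (simp add: power_divide)

lemma point_mass_sum_w_psi_in_s_nbhd_0: "point_mass_sum yenum w_psi \<in> s_nbhd 0"
  by (simp add: point_mass_sum_in_s_nbhd w_psi_nonneg summable_w_psi w_psi_def)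

lemma point_mass_sum_w_psin_notin_s_nbhd_0: "point_mass_sum yenum (w_psin M) \<notin> s_nbhd 0"
  by (simp add: point_mass_sum_in_s_nbhd w_psin_nonneg summable_w_psin w_psin_def)

lemma point_mass_sum_w_psi_notin_s_nbhd_Suc:
  "3 \<le> N \<Longrightarrow> point_mass_sum yenum w_psi \<notin> s_nbhd (Suc N)"
  using half_power_le_eighth[of N]
  by (simp add: point_mass_sum_in_s_nbhd w_psi_nonneg summable_w_psi w_psi_def)

lemma point_mass_sum_w_psin_in_s_nbhd_Suc_iff:
  "3 \<le> N \<Longrightarrow> point_mass_sum yenum (w_psin M) \<in> s_nbhd (Suc N) \<longleftrightarrow> M = N"
  using half_power_le_eighth[of N]
  by (auto simp: point_mass_sum_in_s_nbhd w_psin_nonneg summable_w_psin w_psin_def)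

lemma not_limitin_s_point_mass_sum_w_psin:
  "\<not> limitin (s_topology Yset) (\<lambda>N. point_mass_sum yenum (w_psin N)) (point_mass_sum yenum w_psi) sequentially"
proof
  assume "limitin (s_topology Yset) (\<lambda>N. point_mass_sum yenum (w_psin N)) (point_mass_sum yenum w_psi) sequentially"
  then have "\<forall>\<^sub>F N in sequentially. point_mass_sum yenum (w_psin N) \<in> s_nbhd 0"
    using openin_s_nbhd point_mass_sum_w_psi_in_s_nbhd_0 unfolding limitin_def by blast
  then show False
    by (simp add: point_mass_sum_w_psin_notin_s_nbhd_0)
qed

lemma occ_Lam_s_isolated:
  assumes "\<mu> \<in> occ_Lam"
  shows "\<mu> \<notin> s_topology Yset derived_set_of occ_Lam"
proof -
  obtain T where "openin (s_topology Yset) T" "\<mu> \<in> T" "T \<inter> occ_Lam \<subseteq> {\<mu>}"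
  proof -
    from assms consider "\<mu> = point_mass_sum yenum w_psi"
      | N where "3 \<le> N" "\<mu> = point_mass_sum yenum (w_psin N)"
      by (auto simp: occ_Lam_def)
    then show thesis
    proof cases
      case 1
      then show thesis
        using openin_s_nbhd[of 0]
        by (intro that[of "s_nbhd 0"])
          (auto simp: occ_Lam_def point_mass_sum_w_psi_in_s_nbhd_0 point_mass_sum_w_psin_notin_s_nbhd_0)
    next
      case 2
      then show thesis
        using openin_s_nbhd[of "Suc N"]
        by (intro that[of "s_nbhd (Suc N)"])
          (auto simp: occ_Lam_def point_mass_sum_w_psi_notin_s_nbhd_Suc
            point_mass_sum_w_psin_in_s_nbhd_Suc_iff)
    qed
  qed
  then show ?thesis
    unfolding in_derived_set_of by blast
qed

lemma infinite_occ_Lam: "infinite occ_Lam"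
proof -
  have "inj_on (\<lambda>N. point_mass_sum yenum (w_psin N)) {3..}"
  proof (rule inj_onI)
    fix M N :: nat
    assume "M \<in> {3..}" "N \<in> {3..}"
      and eq: "point_mass_sum yenum (w_psin M) = point_mass_sum yenum (w_psin N)"
    have "point_mass_sum yenum (w_psin M) \<in> s_nbhd (Suc N)"
      using \<open>N \<in> {3..}\<close> by (simp add: eq point_mass_sum_w_psin_in_s_nbhd_Suc_iff)
    then show "M = N"
      using \<open>N \<in> {3..}\<close> by (simp add: point_mass_sum_w_psin_in_s_nbhd_Suc_iff)
  qed
  then have "infinite ((\<lambda>N. point_mass_sum yenum (w_psin N)) ` {3..})"
    using infinite_Ici[of "3::nat"] by (simp add: finite_image_iff)
  then show ?thesis
    by (simp add: occ_Lam_def)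
qed

lemma not_compactin_s_occ_Lam: "\<not> compactin (s_topology Yset) occ_Lam"
proof -
  have "occ_Lam \<inter> s_topology Yset derived_set_of occ_Lam = {}"
    using occ_Lam_s_isolated by blast
  then show ?thesis
    using infinite_occ_Lam by (simp add: discrete_compactin_eq_finite)
qed

theorem proposition3:
  shows "condition_S Xset Aset kern
    \<and> (absorbing Delta kern Aset (bseq 1) \<and> \<not> uniformly_absorbing Delta kern Aset Lam (bseq 1))
    \<and> (limitin (w_topology Yset) (\<lambda>n. occ_Y Yset Aset kern (det_stationary (psin n)) (bseq 1))
          (occ_Y Yset Aset kern (det_stationary psi) (bseq 1)) sequentially
       \<and> \<not> limitin (s_topology Yset) (\<lambda>n. occ_Y Yset Aset kern (det_stationary (psin n)) (bseq 1))
          (occ_Y Yset Aset kern (det_stationary psi) (bseq 1)) sequentially)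
    \<and> (compactin (w_topology Yset) {occ_Y Yset Aset kern \<pi> (bseq 1) | \<pi>. \<pi> \<in> Lam}
       \<and> \<not> compactin (s_topology Yset) {occ_Y Yset Aset kern \<pi> (bseq 1) | \<pi>. \<pi> \<in> Lam})"
proof -
  have occ_psin: "\<forall>\<^sub>F n in sequentially.
      point_mass_sum yenum (w_psin n) = occ_Y Yset Aset kern (det_stationary (psin n)) (bseq 1)"
    using eventually_ge_at_top[of 1] by eventually_elim (rule occ_Y_psin[symmetric])
  have "limitin (w_topology Yset) (\<lambda>n. occ_Y Yset Aset kern (det_stationary (psin n)) (bseq 1))
      (point_mass_sum yenum w_psi) sequentially"
    using occ_psin limitin_w_point_mass_sum_w_psin by (rule limitin_transform_eventually)
  moreover have "\<not> limitin (s_topology Yset) (\<lambda>n. occ_Y Yset Aset kern (det_stationary (psin n)) (bseq 1))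
      (point_mass_sum yenum w_psi) sequentially"
    using occ_psin not_limitin_s_point_mass_sum_w_psin
    by (metis (mono_tags, lifting) eventually_mono limitin_transform_eventually)
  ultimately show ?thesis
    unfolding occ_Y_psi occ_Y_Lam
    using condition_S_kern absorbing_kern not_uniformly_absorbing_Lam
      compactin_w_occ_Lam not_compactin_s_occ_Lam
    by blast
qed

end
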